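(* Let $n=6k+4$ with $k\geq 1$ an integer, and let $\mathcal{V}_n$ be the latin square defined below. Then $\mathcal{V}_n$ has a transversal, and every suitable diagonal of $\mathcal{V}_n$ contains the $k$ entries $$(1,0,3)\ \text{and}\ (3j+2,\ n-6j,\ n-3j+3)\ \text{for } j=1,\dots,k-1,$$ i.e. the entries $(1,0,3),(5,n-6,0),(8,n-12,n-3),(11,n-18,n-6),\ldots,(3k-1,10,3k+10)$ (all coordinates read modulo $n$).
   Context: Rows, columns and symbols are indexed by $\mathbb{Z}_n=\{0,1,\dots,n-1\}$; all arithmetic on symbols is modulo $n$, and congruence conditions on $a,b$ modulo $2$ or $3$ refer to the representatives in $\{0,\dots,n-1\}$. A latin square is viewed as its set of entries $(r,c,s)$ (symbol $s$ in row $r$, column $c$). For $n=6k+4$, $k\ge1$, the latin square $\mathcal{V}_n$ is defined by $\mathcal{V}_n[a,b]=$ $a+b-1$ if $(a,b)\in\{(1,1),(1,2)\}$; $a+b-2$ if $(a,b)\in\{(3,0),(3,2)\}$; $a+b+1$ if $(a,b)=(0,1)$; $a+b+2$ if $(a,b)=(1,0)$; $a+b+3$ if $b\equiv2\pmod3$ and $a=0$; $a+b-3$ if $b>2$, $b\equiv 2\pmod 3$ and $a=3$; $a+b-2$ if $4\le a\le 3k$, $a\equiv 0\pmod3$ and $b\equiv0\pmod2$; $a+b+2$ if $4\le a\le 3k$, $a\equiv1\pmod3$, $b\equiv0\pmod2$ and $b\ne n-2a+2$; $a+b+1$ if $4\le a\le 3k$, $a\equiv1\pmod 3$ and $b\in\{n-2a+2,n-2a+3\}$;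 $a+b+1$ if $4\le a\le 3k$, $a\equiv2\pmod3$ and $b=n-2a+4$; $a+b-1$ if $4\le a\le 3k$, $a\equiv 2\pmod 3$ and $b=n-2a+5$; $a+b$ otherwise. A transversal is a set of $n$ entries containing each row, column and symbol exactly once. For an entry $(r,c,s)$, $\Delta(r,c,s)$ is the unique integer with $\Delta(r,c,s)\equiv s-r-c\pmod n$ and $-n/2<\Delta(r,c,s)\le n/2$. A suitable diagonal is a set of $n$ entries, no two sharing a row or a column, whose $\Delta$-values sum to something congruent to $n/2$ modulo $n$. *)

theory Defs
  imports "HOL-Number_Theory.Number_Theory"
begin

type_synonym entry = "nat \<times> nat \<times> nat"

definition V :: "nat \<Rightarrow> nat \<Rightarrow> nat \<Rightarrow> nat" where
  "V k a b = (let n = 6*k+4; ai = int a; bi = int b; ni = int n;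
     off :: int =
      (if (a,b) \<in> {(1,1),(1,2)} then -1
       else if (a,b) \<in> {(3,0),(3,2)} then -2
       else if (a,b) = (0,1) then 1
       else if (a,b) = (1,0) then 2
       else if b mod 3 = 2 \<and> a = 0 then 3
       else if b > 2 \<and> b mod 3 = 2 \<and> a = 3 then -3
       else if 4 \<le> a \<and> a \<le> 3*k \<and> a mod 3 = 0 \<and> b mod 2 = 0 then -2
       else if 4 \<le> a \<and> a \<le> 3*k \<and> a mod 3 = 1 \<and> b mod 2 = 0 \<and> bi \<noteq> ni - 2*ai + 2 then 2
       else if 4 \<le> a \<and> a \<le> 3*k \<and> a mod 3 = 1 \<and> (bi = ni - 2*ai + 2 \<or> bi = ni - 2*ai + 3) then 1
       else if 4 \<le> a \<and> a \<le> 3*k \<and> a mod 3 = 2 \<and> bi = ni - 2*ai + 4 then 1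
       else if 4 \<le> a \<and> a \<le> 3*k \<and> a mod 3 = 2 \<and> bi = ni - 2*ai + 5 then -1
       else 0)
   in nat ((ai + bi + off) mod ni))"

definition entries :: "nat \<Rightarrow> entry set" where
  "entries k = {(r, c, V k r c) | r c. r < 6*k+4 \<and> c < 6*k+4}"

definition is_transversal :: "nat \<Rightarrow> entry set \<Rightarrow> bool" where
  "is_transversal k T \<longleftrightarrow> (let n = 6*k+4 in
     T \<subseteq> entries k \<and> finite T \<and> card T = n \<and>
     (\<forall>r<n. \<exists>!e\<in>T. fst e = r) \<and>
     (\<forall>c<n. \<exists>!e\<in>T. fst (snd e) = c) \<and>
     (\<forall>s<n. \<exists>!e\<in>T. snd (snd e) = s))"

definition Delta :: "nat \<Rightarrow> entry \<Rightarrow> int" where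
  "Delta n e = (case e of (r, c, s) \<Rightarrow>
     (THE d::int. [d = int s - int r - int c] (mod int n) \<and> - int n < 2*d \<and> 2*d \<le> int n))"

definition is_suitable_diagonal :: "nat \<Rightarrow> entry set \<Rightarrow> bool" where
  "is_suitable_diagonal k D \<longleftrightarrow> (let n = 6*k+4 in
     D \<subseteq> entries k \<and> finite D \<and> card D = n \<and>
     (\<forall>e\<in>D. \<forall>e'\<in>D. e \<noteq> e' \<longrightarrow> fst e \<noteq> fst e' \<and> fst (snd e) \<noteq> fst (snd e')) \<and>
     [(\<Sum>e\<in>D. Delta n e) = int (n div 2)] (mod int n))"

end

theory Submission
  imports Defs
begin

(* Every entry (r, c, V r c) of V_n has V r c = r + c + offset (mod n) with an offset in [-3, 3],
   so its Delta is that offset. In each row the offsets are bounded above by row maxima summing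
   to 3k+2 = n/2 and below by row minima summing to -3k-1. Hence the Delta-sum of a diagonal lies
   in (-n/2, n/2]; if it is congruent to n/2 it equals n/2, and then the diagonal meets the row
   maximum in every row. In row 1 the maximum 2 occurs only in column 0, and in row 3j+2
   (1 <= j < k) the maximum 1 occurs only in column n-6j: these are the listed entries.
   The transversal is explicit; its columns and its symbols are checked to be permutations. *)

lemma cong_centered_eq:
  fixes d d' n :: int
  assumes "[d = d'] (mod n)" "- n < 2*d" "2*d \<le> n" "- n < 2*d'" "2*d' \<le> n"
  shows "d = d'"
proof (rule ccontr)
  assume "d \<noteq> d'"
  moreover have "n dvd d - d'" using assms(1) by (simp add: cong_iff_dvd_diff)
  ultimately have "\<bar>n\<bar> \<le> \<bar>d - d'\<bar>" by (intro dvd_imp_le_int) auto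
  then show False using assms(2-5) by linarith
qed

lemma Delta_eqI:
  assumes "[d = int s - int r - int c] (mod int n)" "- int n < 2*d" "2*d \<le> int n"
  shows "Delta n (r, c, s) = d"
  unfolding Delta_def prod.case
proof (rule the_equality)
  fix d' assume "[d' = int s - int r - int c] (mod int n) \<and> - int n < 2*d' \<and> 2*d' \<le> int n"
  then show "d' = d"
    using assms by (meson cong_centered_eq cong_sym cong_trans)
qed (use assms in blast)

lemma sum_lessThan_if_atMost:
  fixes f :: "nat \<Rightarrow> 'a::comm_monoid_add"
  assumes "m < n"
  shows "(\<Sum>r<n. if r \<le> m then f r else 0) = (\<Sum>r\<le>m. f r)"
proof -
  have "{..<n} \<inter> {..m} = {..m}" using assms by auto
  then show ?thesis using sum.inter_restrict[of "{..<n}" f "{..m}"] by simp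
qed

lemma sum_atMost_mult_3_mod_3:
  fixes f :: "nat \<Rightarrow> int"
  assumes periodic: "\<And>r. 4 \<le> r \<Longrightarrow> f r = g (r mod 3)" and k: "1 \<le> k"
  shows "(\<Sum>r\<le>3*k. f r) = (\<Sum>r\<le>3. f r) + int (k - 1) * (g 0 + g 1 + g 2)"
  using k
proof (induction k rule: nat_induct_at_least)
  case base
  then show ?case by simp
next
  case (Suc k)
  have three_Suc: "3 * Suc k = Suc (Suc (Suc (3*k)))" by simp
  have "(3*k+1) mod 3 = 1" "(3*k+2) mod 3 = 2" "(3*k+3) mod 3 = 0" by presburger+
  then have "f (3*k+1) = g 1" "f (3*k+2) = g 2" "f (3*k+3) = g 0"
    using Suc.hyps periodic by auto
  then have "(\<Sum>r\<le>3 * Suc k. f r) = (\<Sum>r\<le>3*k. f r) + (g 0 + g 1 + g 2)"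
    unfolding three_Suc sum.atMost_Suc by (simp add: numeral_3_eq_3)
  also have "\<dots> = (\<Sum>r\<le>3. f r) + int (Suc k - 1) * (g 0 + g 1 + g 2)"
    unfolding Suc.IH using Suc.hyps by (simp add: of_nat_diff algebra_simps)
  finally show ?case .
qed

lemma ex1_in_image_if_bij_betw:
  assumes "bij_betw g A B" "c \<in> B" "\<And>a. a \<in> A \<Longrightarrow> p (f a) = g a"
  shows "\<exists>!e\<in>f ` A. p e = c"
proof -
  obtain a where a: "a \<in> A" "g a = c" using assms(1,2) by (auto simp: bij_betw_def)
  show ?thesis
  proof (rule ex1I[of _ "f a"])
    show "f a \<in> f ` A \<and> p (f a) = c" using a assms(3) by simp
  next
    fix e assume "e \<in> f ` A \<and> p e = c"
    then obtain a' where "a' \<in> A" "e = f a'" "g a' = c" using assms(3) by auto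
    then show "e = f a" using a assms(1) by (metis bij_betw_def inj_onD)
  qed
qed

lemma bij_betw_lessThan_if_surj:
  fixes f :: "nat \<Rightarrow> nat"
  assumes "\<And>a. a < n \<Longrightarrow> f a < n" "\<And>c. c < n \<Longrightarrow> \<exists>a<n. f a = c"
  shows "bij_betw f {..<n} {..<n}"
proof -
  have image: "f ` {..<n} = {..<n}" using assms by force
  then have "inj_on f {..<n}" by (intro finite_surj_inj) auto
  then show ?thesis using image by (rule bij_betw_imageI)
qed

section \<open>The offsets of V\<close>

definition offset :: "nat \<Rightarrow> nat \<Rightarrow> nat \<Rightarrow> int" where
  "offset k a b = (let n = 6*k+4; ai = int a; bi = int b; ni = int n in
      (if (a,b) \<in> {(1,1),(1,2)} then -1
       else if (a,b) \<in> {(3,0),(3,2)} then -2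
       else if (a,b) = (0,1) then 1
       else if (a,b) = (1,0) then 2
       else if b mod 3 = 2 \<and> a = 0 then 3
       else if b > 2 \<and> b mod 3 = 2 \<and> a = 3 then -3
       else if 4 \<le> a \<and> a \<le> 3*k \<and> a mod 3 = 0 \<and> b mod 2 = 0 then -2
       else if 4 \<le> a \<and> a \<le> 3*k \<and> a mod 3 = 1 \<and> b mod 2 = 0 \<and> bi \<noteq> ni - 2*ai + 2 then 2
       else if 4 \<le> a \<and> a \<le> 3*k \<and> a mod 3 = 1 \<and> (bi = ni - 2*ai + 2 \<or> bi = ni - 2*ai + 3) then 1
       else if 4 \<le> a \<and> a \<le> 3*k \<and> a mod 3 = 2 \<and> bi = ni - 2*ai + 4 then 1
       else if 4 \<le> a \<and> a \<le> 3*k \<and> a mod 3 = 2 \<and> bi = ni - 2*ai + 5 then -1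
       else 0))"

lemma V_eq_offset: "V k a b = nat ((int a + int b + offset k a b) mod int (6*k+4))"
  unfolding V_def offset_def Let_def by (rule refl)

lemma V_less: "V k a b < 6*k+4"
  unfolding V_eq_offset by (simp add: nat_less_iff)

lemma V_eqI: "int a + int b + offset k a b = int s \<Longrightarrow> s < 6*k+4 \<Longrightarrow> V k a b = s"
  unfolding V_eq_offset by simp

lemma V_eqI_wrap: "int a + int b + offset k a b = int s + int (6*k+4) \<Longrightarrow> s < 6*k+4 \<Longrightarrow> V k a b = s"
  unfolding V_eq_offset by simp

lemma offset_row_0: "offset k 0 b = (if b = 1 then 1 else if b mod 3 = 2 then 3 else 0)"
  unfolding offset_def Let_def by auto

lemma offset_row_1: "offset k 1 b = (if b = 0 then 2 else if b = 1 \<or> b = 2 then -1 else 0)"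
  unfolding offset_def Let_def by auto

lemma offset_row_2: "offset k 2 b = 0"
  unfolding offset_def Let_def by auto

lemma offset_row_3: "offset k 3 b = (if b = 0 \<or> b = 2 then -2 else if 2 < b \<and> b mod 3 = 2 then -3 else 0)"
  unfolding offset_def Let_def by auto

lemma offset_middle_row_0:
  "4 \<le> a \<Longrightarrow> a \<le> 3*k \<Longrightarrow> a mod 3 = 0 \<Longrightarrow> offset k a b = (if even b then -2 else 0)"
  unfolding offset_def Let_def by auto

lemma offset_middle_row_1:
  "4 \<le> a \<Longrightarrow> a \<le> 3*k \<Longrightarrow> a mod 3 = 1 \<Longrightarrow> offset k a b =
   (if b + 2*a = 6*k+6 \<or> b + 2*a = 6*k+7 then 1 else if even b then 2 else 0)"
  unfolding offset_def Let_def by (auto; presburger)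

lemma offset_middle_row_2:
  "4 \<le> a \<Longrightarrow> a \<le> 3*k \<Longrightarrow> a mod 3 = 2 \<Longrightarrow> offset k a b =
   (if b + 2*a = 6*k+8 then 1 else if b + 2*a = 6*k+9 then -1 else 0)"
  unfolding offset_def Let_def by auto

lemma offset_beyond: "3*k < a \<Longrightarrow> 3 < a \<Longrightarrow> offset k a b = 0"
  unfolding offset_def Let_def by auto

lemma V_beyond: "3*k < a \<Longrightarrow> 3 < a \<Longrightarrow> V k a b = (a + b) mod (6*k+4)"
  unfolding V_eq_offset by (simp add: offset_beyond flip: of_nat_add zmod_int)

lemma offset_abs_le: "\<bar>offset k a b\<bar> \<le> 3"
  unfolding offset_def Let_def by auto

lemma Delta_entry: "1 \<le> k \<Longrightarrow> Delta (6*k+4) (r, c, V k r c) = offset k r c"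
proof (rule Delta_eqI)
  have "[int (V k r c) = int r + int c + offset k r c] (mod int (6*k+4))"
    unfolding cong_def V_eq_offset by simp
  from cong_diff[OF cong_diff[OF this cong_refl[of "int r"]] cong_refl[of "int c"]]
  have "[int (V k r c) - int r - int c = offset k r c] (mod int (6*k+4))"
    by simp
  then show "[offset k r c = int (V k r c) - int r - int c] (mod int (6*k+4))"
    by (rule cong_sym)
qed (use offset_abs_le[of k r c] in linarith)+

lemma mem_entries: "(r, c, s) \<in> entries k \<longleftrightarrow> r < 6*k+4 \<and> c < 6*k+4 \<and> s = V k r c"
  unfolding entries_def by auto

section \<open>Suitable diagonals\<close>

definition offset_max :: "nat \<Rightarrow> int" where
  "offset_max r = (if r = 0 then 3 else if r = 1 then 2 else if r < 4 then 0
     else if r mod 3 = 1 then 2 else if r mod 3 = 2 then 1 else 0)"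

definition offset_min :: "nat \<Rightarrow> int" where
  "offset_min r = (if r = 1 then -1 else if r = 3 then -3 else if r < 4 then 0
     else if r mod 3 = 0 then -2 else if r mod 3 = 2 then -1 else 0)"

lemma offset_bounds:
  assumes "1 \<le> k"
  shows "(if r \<le> 3*k then offset_min r else 0) \<le> offset k r b"
    and "offset k r b \<le> (if r \<le> 3*k then offset_max r else 0)"
proof -
  consider "r < 4" | "4 \<le> r" "r \<le> 3*k" "r mod 3 = 0" | "4 \<le> r" "r \<le> 3*k" "r mod 3 = 1"
    | "4 \<le> r" "r \<le> 3*k" "r mod 3 = 2" | "3*k < r" "3 < r"
    by linarith
  then have "(if r \<le> 3*k then offset_min r else 0) \<le> offset k r b \<and>
      offset k r b \<le> (if r \<le> 3*k then offset_max r else 0)"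
  proof cases
    case 1
    then consider "r = 0" | "r = 1" | "r = 2" | "r = 3" by linarith
    then show ?thesis using assms offset_row_1[of k b]
      by cases
        (auto simp: offset_min_def offset_max_def offset_row_0 offset_row_1 offset_row_2 offset_row_3)
  qed (auto simp: offset_min_def offset_max_def offset_middle_row_0 offset_middle_row_1
      offset_middle_row_2 offset_beyond)
  then show "(if r \<le> 3*k then offset_min r else 0) \<le> offset k r b"
    and "offset k r b \<le> (if r \<le> 3*k then offset_max r else 0)"
    by auto
qed

lemma sum_offset_max:
  assumes "1 \<le> k"
  shows "(\<Sum>r\<le>3*k. offset_max r) = 3 * int k + 2"
proof -
  have "{..3::nat} = {0, 1, 2, 3}" by auto
  then have "(\<Sum>r\<le>3. offset_max r) = 5" by (simp add: offset_max_def)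
  moreover have "offset_max r = (if r mod 3 = 1 then 2 else if r mod 3 = 2 then 1 else 0)"
    if "4 \<le> r" for r
    using that by (simp add: offset_max_def)
  ultimately show ?thesis
    using sum_atMost_mult_3_mod_3[of offset_max "\<lambda>i. if i = 1 then 2 else if i = 2 then 1 else 0" k] assms
    by (simp add: of_nat_diff)
qed

lemma sum_offset_min:
  assumes "1 \<le> k"
  shows "(\<Sum>r\<le>3*k. offset_min r) = - 3 * int k - 1"
proof -
  have "{..3::nat} = {0, 1, 2, 3}" by auto
  then have "(\<Sum>r\<le>3. offset_min r) = -4" by (simp add: offset_min_def)
  moreover have "offset_min r = (if r mod 3 = 0 then -2 else if r mod 3 = 2 then -1 else 0)"
    if "4 \<le> r" for r
    using that by (simp add: offset_min_def)
  ultimately show ?thesis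
    using sum_atMost_mult_3_mod_3[of offset_min "\<lambda>i. if i = 0 then -2 else if i = 2 then -1 else 0" k] assms
    by (simp add: of_nat_diff)
qed

lemma suitable_diagonal_fst_bij:
  assumes "is_suitable_diagonal k D"
  shows "bij_betw fst D {..<6*k+4}"
proof (rule bij_betw_imageI)
  have D: "D \<subseteq> entries k" "card D = 6*k+4"
    and distinct: "\<forall>e\<in>D. \<forall>e'\<in>D. e \<noteq> e' \<longrightarrow> fst e \<noteq> fst e'"
    using assms unfolding is_suitable_diagonal_def Let_def by auto
  show inj: "inj_on fst D" using distinct by (meson inj_onI)
  show "fst ` D = {..<6*k+4}"
  proof (rule card_subset_eq)
    show "fst ` D \<subseteq> {..<6*k+4}" using D(1) by (auto simp: entries_def)
    show "card (fst ` D) = card {..<6*k+4}" using card_image[OF inj] D(2) by simp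
  qed simp
qed

lemma suitable_diagonal_sum_rows:
  assumes "is_suitable_diagonal k D"
  shows "(\<Sum>(r, c, s)\<in>D. f r) = (\<Sum>r<6*k+4. f r)"
  using sum.reindex_bij_betw[OF suitable_diagonal_fst_bij[OF assms], of f]
  by (simp add: case_prod_beta)

lemma suitable_diagonal_offset_sum:
  assumes k: "1 \<le> k" and D: "is_suitable_diagonal k D"
  shows "(\<Sum>(r, c, s)\<in>D. offset k r c) = 3 * int k + 2"
proof -
  let ?S = "\<Sum>(r, c, s)\<in>D. offset k r c"
  have "D \<subseteq> entries k" and Delta_sum: "[(\<Sum>e\<in>D. Delta (6*k+4) e) = int ((6*k+4) div 2)] (mod int (6*k+4))"
    using D unfolding is_suitable_diagonal_def Let_def by auto
  then have "(\<Sum>e\<in>D. Delta (6*k+4) e) = ?S"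
    by (intro sum.cong) (auto simp: mem_entries Delta_entry[OF k])
  then have "[?S = 3 * int k + 2] (mod 6 * int k + 4)"
    using Delta_sum by (simp add: add.commute)
  moreover have "?S \<le> 3 * int k + 2"
  proof -
    have "?S \<le> (\<Sum>(r, c, s)\<in>D. if r \<le> 3*k then offset_max r else 0)"
      by (intro sum_mono) (auto intro: offset_bounds[OF k])
    also have "\<dots> = 3 * int k + 2"
      by (simp add: suitable_diagonal_sum_rows[OF D] sum_lessThan_if_atMost sum_offset_max[OF k])
    finally show ?thesis .
  qed
  moreover have "- 3 * int k - 1 \<le> ?S"
  proof -
    have "- 3 * int k - 1 = (\<Sum>(r, c, s)\<in>D. if r \<le> 3*k then offset_min r else 0)"
      by (simp add: suitable_diagonal_sum_rows[OF D] sum_lessThan_if_atMost sum_offset_min[OF k])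
    also have "\<dots> \<le> ?S"
      by (intro sum_mono) (auto intro: offset_bounds[OF k])
    finally show ?thesis .
  qed
  \<comment> \<open>\<open>[-3k-1, 3k+2]\<close> is \<open>(-n/2, n/2]\<close>, a full set of residues mod \<open>n\<close>\<close>
  ultimately show ?thesis by (intro cong_centered_eq[of _ _ "6 * int k + 4"]) auto
qed

lemma suitable_diagonal_offset_max:
  assumes k: "1 \<le> k" and D: "is_suitable_diagonal k D" and r: "r < 6*k+4"
  obtains c where "(r, c, V k r c) \<in> D" "offset k r c = (if r \<le> 3*k then offset_max r else 0)"
proof -
  let ?bound = "\<lambda>r. if r \<le> 3*k then offset_max r else 0"
  have sub: "D \<subseteq> entries k" and fin: "finite D"
    using D unfolding is_suitable_diagonal_def Let_def by auto
  obtain e where e: "e \<in> D" "fst e = r"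
    using r bij_betw_imp_surj_on[OF suitable_diagonal_fst_bij[OF D]] by (metis imageE lessThan_iff)
  then obtain c where c: "(r, c, V k r c) \<in> D"
    using sub by (cases e) (auto simp: mem_entries)
  have sums: "(\<Sum>(r, c, s)\<in>D. offset k r c) = (\<Sum>(r, c, s)\<in>D. ?bound r)"
    by (simp add: suitable_diagonal_offset_sum[OF k D] suitable_diagonal_sum_rows[OF D]
        sum_lessThan_if_atMost sum_offset_max[OF k])
  have "(\<lambda>(r, c, s). offset k r c) (r, c, V k r c) = (\<lambda>(r, c, s). ?bound r) (r, c, V k r c)"
    by (rule sum_mono_inv[OF sums _ c fin]) (auto intro: offset_bounds[OF k])
  then show ?thesis using c that by simp
qed

lemma suitable_diagonal_row_1:
  assumes "1 \<le> k" "is_suitable_diagonal k D"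
  shows "(1, 0, 3) \<in> D"
proof -
  obtain c where c: "(1, c, V k 1 c) \<in> D" "offset k 1 c = 2"
    using suitable_diagonal_offset_max[OF assms, of 1] assms(1) by (auto simp: offset_max_def)
  then have "c = 0" using offset_row_1[of k c] by (auto split: if_splits)
  moreover have "V k 1 0 = 3"
    by (rule V_eqI) (use offset_row_1[of k 0] in simp_all)
  ultimately show ?thesis using c(1) by simp
qed

lemma suitable_diagonal_middle_row_2:
  assumes k: "1 \<le> k" and D: "is_suitable_diagonal k D" and j: "1 \<le> j" "j < k"
  shows "(3*j+2, (6*k+4) - 6*j, ((6*k+4) - 3*j + 3) mod (6*k+4)) \<in> D"
proof -
  let ?a = "3*j+2"
  have a: "4 \<le> ?a" "?a \<le> 3*k" "?a mod 3 = 2" using j by (auto, presburger)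
  obtain c where c: "(?a, c, V k ?a c) \<in> D" "offset k ?a c = 1"
    using suitable_diagonal_offset_max[OF k D, of ?a] a by (auto simp: offset_max_def)
  then have "c = (6*k+4) - 6*j"
    using offset_middle_row_2[OF a, of c] by (auto split: if_splits)
  moreover have "V k ?a c = ((6*k+4) - 3*j + 3) mod (6*k+4)"
  proof -
    have "int ?a + int c + offset k ?a c = int ((6*k+4) - 3*j + 3)"
      using c(2) \<open>c = _\<close> j by auto
    then show ?thesis
      unfolding V_eq_offset by (simp add: zmod_int[symmetric] del: of_nat_add)
  qed
  ultimately show ?thesis using c(1) by simp
qed

section \<open>A transversal\<close>

lemma is_transversal_graph:
  fixes k :: nat and \<sigma> :: "nat \<Rightarrow> nat"
  defines "n \<equiv> 6*k+4"
  assumes col: "bij_betw \<sigma> {..<n} {..<n}" and sym: "bij_betw (\<lambda>a. V k a (\<sigma> a)) {..<n} {..<n}"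
  shows "is_transversal k ((\<lambda>a. (a, \<sigma> a, V k a (\<sigma> a))) ` {..<n})"
  unfolding is_transversal_def Let_def n_def[symmetric]
proof (intro conjI allI impI)
  let ?T = "(\<lambda>a. (a, \<sigma> a, V k a (\<sigma> a))) ` {..<n}"
  show "?T \<subseteq> entries k"
    using bij_betw_apply[OF col] by (auto simp: mem_entries n_def)
  show "finite ?T" by simp
  have "inj_on (\<lambda>a. (a, \<sigma> a, V k a (\<sigma> a))) {..<n}" by (rule inj_onI) simp
  then show "card ?T = n" by (simp add: card_image)
  show "\<exists>!e\<in>?T. fst e = r" if "r < n" for r
    using that by (intro ex1_in_image_if_bij_betw[of id]) auto
  show "\<exists>!e\<in>?T. fst (snd e) = c" if "c < n" for c
    using that by (intro ex1_in_image_if_bij_betw[OF col]) auto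
  show "\<exists>!e\<in>?T. snd (snd e) = s" if "s < n" for s
    using that by (intro ex1_in_image_if_bij_betw[OF sym]) auto
qed

definition transversal_col :: "nat \<Rightarrow> nat \<Rightarrow> nat" where
  "transversal_col k a =
    (if a = 0 then 2 else if a = 1 then 0 else if a = 2 then 6 else if a = 3 then 1
     else if a \<le> 3*k then (if a mod 3 = 0 then 6*k+11 - 2*a else 6*k+8 - 2*a)
     else if a = 3*k+1 then 5 else if a = 3*k+2 then 7 else if a = 3*k+3 then 4
     else if a = 3*k+5 then 3
     else if a mod 3 = 1 then 12*k+11 - 2*a else if a mod 3 = 2 then 12*k+17 - 2*a
     else 12*k+14 - 2*a)"

lemma transversal_col_middle:
  "4 \<le> a \<Longrightarrow> a \<le> 3*k \<Longrightarrow>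
    transversal_col k a = (if a mod 3 = 0 then 6*k+11 - 2*a else 6*k+8 - 2*a)"
  unfolding transversal_col_def by simp

lemma transversal_col_final:
  "3*k+3 < a \<Longrightarrow> a \<noteq> 3*k+5 \<Longrightarrow> transversal_col k a =
    (if a mod 3 = 1 then 12*k+11 - 2*a else if a mod 3 = 2 then 12*k+17 - 2*a else 12*k+14 - 2*a)"
  unfolding transversal_col_def by simp

lemma transversal_col_less:
  assumes "1 \<le> k" "a < 6*k+4"
  shows "transversal_col k a < 6*k+4"
proof -
  consider "a \<le> 3" | "4 \<le> a" "a \<le> 3*k" | "a \<in> {3*k+1, 3*k+2, 3*k+3, 3*k+5}"
    | "3*k+3 < a" "a \<noteq> 3*k+5"
    by fastforce
  then show ?thesis
  proof cases
    case 4
    have "a mod 3 \<noteq> 1 \<Longrightarrow> a mod 3 \<noteq> 2 \<Longrightarrow> 3*k+6 \<le> a" "a mod 3 = 2 \<Longrightarrow> 3*k+8 \<le> a"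
      using 4 by presburger+
    then show ?thesis using 4 assms by (auto simp: transversal_col_final)
  qed (use assms in \<open>auto simp: transversal_col_def\<close>)
qed

lemma transversal_col_surj:
  assumes k: "1 \<le> k" and c: "c < 6*k+4"
  shows "\<exists>a<6*k+4. transversal_col k a = c"
proof (cases "c < 8")
  case True
  then have "c \<in> transversal_col k ` {0, 1, 2, 3, 3*k+1, 3*k+2, 3*k+3, 3*k+5}"
    using k by (auto simp: transversal_col_def)
  then obtain a where "a \<in> {0, 1, 2, 3, 3*k+1, 3*k+2, 3*k+3, 3*k+5}" "transversal_col k a = c"
    by blast
  then show ?thesis using k by (intro exI[of _ a]) auto
next
  case False
  obtain q r where qr: "c = 6*q + r" "r < 6"
    by (metis mod_div_decomp mod_less_divisor mult.commute zero_less_numeral)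
  then consider "r = 0" | "r = 4" | "r = 5" | "r = 3" | "r = 1" | "r = 2" by linarith
  then show ?thesis
  proof cases
    case 1
    with False c qr have "2 \<le> q" "q \<le> k" by linarith+
    then show ?thesis using qr 1
      by (intro exI[of _ "3*(k+1-q) + 1"]) (auto simp: transversal_col_middle)
  next
    case 2
    with False c qr have "1 \<le> q" "q < k" by linarith+
    then show ?thesis using qr 2
      by (intro exI[of _ "3*(k-q) + 2"]) (auto simp: transversal_col_middle mod_Suc)
  next
    case 3
    with False c qr have "1 \<le> q" "q < k" by linarith+
    then show ?thesis using qr 3
      by (intro exI[of _ "3*(k+1-q)"]) (auto simp: transversal_col_middle)
  next
    case 4
    with False c qr have "1 \<le> q" "q \<le> k" by linarith+
    moreover have "3*m + 1 \<noteq> 3*k + 5" for m by presburger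
    ultimately show ?thesis using qr 4
      by (intro exI[of _ "3*(2*k+1-q) + 1"]) (auto simp: transversal_col_final)
  next
    case 5
    with False c qr have "2 \<le> q" "q \<le> k" by linarith+
    then show ?thesis using qr 5
      by (intro exI[of _ "3*(2*k+2-q) + 2"]) (auto simp: transversal_col_final mod_Suc)
  next
    case 6
    with False c qr have "1 \<le> q" "q \<le> k" by linarith+
    then show ?thesis using qr 6
      by (intro exI[of _ "3*(2*k+2-q)"]) (auto simp: transversal_col_final)
  qed
qed

lemma V_first_rows:
  assumes "1 \<le> k"
  shows "V k 0 2 = 5" "V k 1 0 = 3" "V k 2 6 = 8" "V k 3 1 = 4"
  using assms offset_row_1[of k 0]
  by (auto intro!: V_eqI simp: offset_row_0 offset_row_2 offset_row_3)

lemma transversal_symbol_middle: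
  assumes "7 \<le> a" "a \<le> 3*k"
  shows "V k a (transversal_col k a) =
    (if a mod 3 = 1 then 6*k+10 - a else if a mod 3 = 2 then 6*k+9 - a else 6*k+11 - a)"
proof -
  have a: "4 \<le> a" "a \<le> 3*k" using assms by auto
  consider "a mod 3 = 1" | "a mod 3 = 2" | "a mod 3 = 0" by linarith
  then show ?thesis
  proof cases
    case 1
    have "even (6*k+8 - 2*a)" by presburger
    then have "offset k a (6*k+8 - 2*a) = 2" using a 1 by (simp add: offset_middle_row_1)
    then show ?thesis using assms 1 by (intro V_eqI) (auto simp: transversal_col_middle)
  next
    case 2
    have "offset k a (6*k+8 - 2*a) = 1" using a 2 by (simp add: offset_middle_row_2)
    then show ?thesis using assms 2 by (intro V_eqI) (auto simp: transversal_col_middle)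
  next
    case 3
    have "odd (6*k+11 - 2*a)" using a by presburger
    then have "offset k a (6*k+11 - 2*a) = 0" using a 3 by (simp add: offset_middle_row_0)
    moreover have "9 \<le> a" using assms 3 by presburger
    ultimately show ?thesis using assms 3 by (intro V_eqI) (auto simp: transversal_col_middle)
  qed
qed

lemma transversal_symbol_final:
  assumes k: "2 \<le> k" and a: "3*k < a" "a < 6*k+4" "a \<noteq> 3*k+2"
  shows "V k a (transversal_col k a) =
    (if a mod 3 = 1 then 6*k+7 - a else if a mod 3 = 2 then 6*k+13 - a else 6*k+10 - a)"
proof -
  have offset: "offset k a b = 0" for b using a k by (intro offset_beyond) auto
  consider "a \<in> {3*k+1, 3*k+3, 3*k+5}" | "3*k+3 < a" "a \<noteq> 3*k+5" using a by fastforce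
  then show ?thesis
  proof cases
    case 1
    have "(3*k+1) mod 3 = 1" "(3*k+3) mod 3 = 0" "(3*k+5) mod 3 = 2" by presburger+
    then show ?thesis using 1 k offset by (auto intro!: V_eqI simp: transversal_col_def)
  next
    case 2
    then have "a mod 3 \<noteq> 1 \<Longrightarrow> a mod 3 \<noteq> 2 \<Longrightarrow> 3*k+6 \<le> a" "a mod 3 = 2 \<Longrightarrow> 3*k+8 \<le> a"
      by presburger+
    then show ?thesis using 2 a offset by (auto intro!: V_eqI_wrap simp: transversal_col_final)
  qed
qed

lemma transversal_symbol_special:
  assumes k: "2 \<le> k"
  shows "V k 0 (transversal_col k 0) = 5" "V k 1 (transversal_col k 1) = 3"
    "V k 2 (transversal_col k 2) = 8" "V k 3 (transversal_col k 3) = 4"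
    "V k 4 (transversal_col k 4) = 2" "V k 5 (transversal_col k 5) = 0"
    "V k 6 (transversal_col k 6) = 1" "V k (3*k+2) (transversal_col k (3*k+2)) = 3*k+9"
proof -
  show "V k 0 (transversal_col k 0) = 5" "V k 1 (transversal_col k 1) = 3"
    "V k 2 (transversal_col k 2) = 8" "V k 3 (transversal_col k 3) = 4"
    using V_first_rows k by (simp_all add: transversal_col_def)
  show "V k 4 (transversal_col k 4) = 2"
    using k by (intro V_eqI_wrap) (simp_all add: transversal_col_middle offset_middle_row_1)
  show "V k 5 (transversal_col k 5) = 0"
    using k by (intro V_eqI_wrap) (simp_all add: transversal_col_middle offset_middle_row_2)
  have "odd (6*k - 1)" using k by presburger
  then show "V k 6 (transversal_col k 6) = 1"
    using k by (intro V_eqI_wrap) (simp_all add: transversal_col_middle offset_middle_row_0)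
  show "V k (3*k+2) (transversal_col k (3*k+2)) = 3*k+9"
    using k by (intro V_eqI) (simp_all add: transversal_col_def offset_beyond)
qed

lemma transversal_symbol_surj:
  assumes k: "2 \<le> k" and s: "s < 6*k+4"
  shows "\<exists>a<6*k+4. V k a (transversal_col k a) = s"
proof (cases "s \<in> {0, 1, 2, 3, 4, 5, 8, 3*k+9}")
  case True
  then have "s \<in> (\<lambda>a. V k a (transversal_col k a)) ` {0, 1, 2, 3, 4, 5, 6, 3*k+2}"
    by (simp only: image_insert image_empty transversal_symbol_special[OF k]) auto
  then obtain a where "a \<in> {0, 1, 2, 3, 4, 5, 6, 3*k+2}" "V k a (transversal_col k a) = s"
    by blast
  then show ?thesis using k by (intro exI[of _ a]) auto
next
  case False
  have residue_ne: "3*m + 1 \<noteq> 3*k + 2" "3*m \<noteq> 3*k + 2" for m by presburger+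
  obtain q r where qr: "s = 3*q + r" "r < 3"
    by (metis mod_div_decomp mod_less_divisor mult.commute zero_less_numeral)
  then consider "r = 0" "q \<le> k+2" | "r = 0" "k+2 < q" | "r = 1" "q \<le> k+2" | "r = 1" "k+2 < q"
    | "r = 2" "q \<le> k+2" | "r = 2" "k+2 < q"
    by linarith
  then show ?thesis
  proof cases
    case 1
    with False s qr have "2 \<le> q" by auto
    then show ?thesis using qr 1 k residue_ne
      by (intro exI[of _ "3*(2*k+2-q) + 1"]) (auto simp: transversal_symbol_final)
  next
    case 2
    with False s qr have "k+4 \<le> q" "q \<le> 2*k+1" by auto
    then show ?thesis using qr 2
      by (intro exI[of _ "3*(2*k+3-q) + 1"]) (auto simp: transversal_symbol_middle)
  next
    case 3
    with False s qr have "2 \<le> q" by auto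
    then show ?thesis using qr 3 k residue_ne
      by (intro exI[of _ "3*(2*k+3-q)"]) (auto simp: transversal_symbol_final)
  next
    case 4
    with False s qr have "q \<le> 2*k" by auto
    then show ?thesis using qr 4
      by (intro exI[of _ "3*(2*k+2-q) + 2"]) (auto simp: transversal_symbol_middle mod_Suc)
  next
    case 5
    with False s qr have "3 \<le> q" by auto
    then show ?thesis using qr 5 k
      by (intro exI[of _ "3*(2*k+3-q) + 2"]) (auto simp: transversal_symbol_final mod_Suc)
  next
    case 6
    with False s qr have "q \<le> 2*k" by auto
    then show ?thesis using qr 6
      by (intro exI[of _ "3*(2*k+3-q)"]) (auto simp: transversal_symbol_middle)
  qed
qed

(* For k = 1 the symbols of rows 3k+2, 3k+3 and 3k+5 wrap around modulo n = 10, so the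
   formulas of transversal_symbol_final and transversal_symbol_special do not apply. *)
lemma transversal_symbol_surj_k_eq_1:
  assumes "s < 10"
  shows "\<exists>a<10. V 1 a (transversal_col 1 a) = s"
proof -
  have "s \<in> {5, 3, 8, 4, 9, 2, 0, 6, 1, 7}"
    using assms by (simp; presburger)
  also have "\<dots> \<subseteq> (\<lambda>a. V 1 a (transversal_col 1 a)) ` {0, 1, 2, 3, 4, 5, 6, 7, 8, 9}"
    using V_first_rows[of 1] by (simp add: V_beyond transversal_col_def)
  finally obtain a where "a \<in> {0, 1, 2, 3, 4, 5, 6, 7, 8, 9}" "V 1 a (transversal_col 1 a) = s"
    by blast
  then show ?thesis by (intro exI[of _ a]) auto
qed

lemma transversal_exists:
  assumes k: "1 \<le> k"
  shows "\<exists>T. is_transversal k T"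
proof -
  have "bij_betw (transversal_col k) {..<6*k+4} {..<6*k+4}"
    using transversal_col_less[OF k] transversal_col_surj[OF k] by (intro bij_betw_lessThan_if_surj)
  moreover have "bij_betw (\<lambda>a. V k a (transversal_col k a)) {..<6*k+4} {..<6*k+4}"
  proof (rule bij_betw_lessThan_if_surj)
    show "\<exists>a<6*k+4. V k a (transversal_col k a) = s" if "s < 6*k+4" for s
    proof (cases "k = 1")
      case True
      then show ?thesis using that transversal_symbol_surj_k_eq_1 by simp
    next
      case False
      then show ?thesis using that k transversal_symbol_surj by simp
    qed
  qed (rule V_less)
  ultimately show ?thesis by (blast intro: is_transversal_graph)
qed

theorem lemma9:
  fixes k :: nat
  assumes "k \<ge> 1"
  shows "(\<exists>T. is_transversal k T) \<and>
    (\<forall>D. is_suitable_diagonal k D \<longrightarrow>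
       (1, 0, 3) \<in> D \<and>
       (\<forall>j\<in>{1..k-1}. (3*j+2, (6*k+4) - 6*j, ((6*k+4) - 3*j + 3) mod (6*k+4)) \<in> D))"
  using assms transversal_exists suitable_diagonal_row_1 suitable_diagonal_middle_row_2
  by fastforce

end
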